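(* Let $G$ be a bipartite graph with $|V(G)|\ge 4$ such that $G-x$ is connected for every vertex $x\in V(G)$. Let $e$ be a new edge joining two distinct vertices of $G$ in the same part of the bipartition. Then $G+e$ is not strongly EFX-orientable.
   Context: All graphs are finite and simple. For a graph $G=(V,E)$ and $v\in V$, $E(v)$ is the set of edges incident to $v$. A graphical instance on $G$ assigns to each vertex $v$ a valuation $f_v:2^E\to\mathbb{R}_{\ge 0}$ that is monotone ($A\subseteq B\Rightarrow f_v(A)\le f_v(B)$) and satisfies $f_v(X)=f_v(X\cap E(v))$ for all $X\subseteq E$. An orientation of $G$ chooses for each edge one of its endpoints as its head; vertex $v$ receives the bundle $X_v$ of edges whose head is $v$. The orientation is EFX if for all $u,v\in V$ and every $g\in X_v$, $f_u(X_u)\ge f_u(X_v\setminus\{g\})$. A graph $G$ is strongly EFX-orientable if for every graphical instance on $G$ there exists an EFX orientation. *)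

theory Defs
  imports Complex_Main
begin

definition simple_graph :: "'v set \<Rightarrow> 'v set set \<Rightarrow> bool" where
  "simple_graph V E \<longleftrightarrow> finite V \<and> (\<forall>e\<in>E. e \<subseteq> V \<and> card e = 2)"

definition bipartition :: "'v set \<Rightarrow> 'v set set \<Rightarrow> 'v set \<Rightarrow> 'v set \<Rightarrow> bool" where
  "bipartition V E A B \<longleftrightarrow> A \<union> B = V \<and> A \<inter> B = {} \<and>
     (\<forall>e\<in>E. \<exists>a b. a \<in> A \<and> b \<in> B \<and> e = {a, b})"

definition bipartite :: "'v set \<Rightarrow> 'v set set \<Rightarrow> bool" where
  "bipartite V E \<longleftrightarrow> (\<exists>A B. bipartition V E A B)"

definition connected_graph :: "'v set \<Rightarrow> 'v set set \<Rightarrow> bool" where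
  "connected_graph V E \<longleftrightarrow> V \<noteq> {} \<and>
     (\<forall>x\<in>V. \<forall>y\<in>V. (x, y) \<in> {(a, b). {a, b} \<in> E \<and> a \<in> V \<and> b \<in> V}\<^sup>*)"

definition del_vertex :: "'v set set \<Rightarrow> 'v \<Rightarrow> 'v set set" where
  "del_vertex E x = {e \<in> E. x \<notin> e}"

definition incident_edges :: "'v set set \<Rightarrow> 'v \<Rightarrow> 'v set set" where
  "incident_edges E v = {e \<in> E. v \<in> e}"

definition graphical_instance :: "'v set \<Rightarrow> 'v set set \<Rightarrow> ('v \<Rightarrow> 'v set set \<Rightarrow> real) \<Rightarrow> bool" where
  "graphical_instance V E f \<longleftrightarrow>
     (\<forall>v\<in>V. (\<forall>X. X \<subseteq> E \<longrightarrow> f v X \<ge> 0)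
       \<and> (\<forall>X Y. X \<subseteq> Y \<and> Y \<subseteq> E \<longrightarrow> f v X \<le> f v Y)
       \<and> (\<forall>X. X \<subseteq> E \<longrightarrow> f v X = f v (X \<inter> incident_edges E v)))"

definition orientation :: "'v set set \<Rightarrow> ('v set \<Rightarrow> 'v) \<Rightarrow> bool" where
  "orientation E h \<longleftrightarrow> (\<forall>e\<in>E. h e \<in> e)"

definition bundle_of :: "'v set set \<Rightarrow> ('v set \<Rightarrow> 'v) \<Rightarrow> 'v \<Rightarrow> 'v set set" where
  "bundle_of E h v = {e \<in> E. h e = v}"

definition EFX_orientation :: "'v set \<Rightarrow> 'v set set \<Rightarrow> ('v \<Rightarrow> 'v set set \<Rightarrow> real) \<Rightarrow> ('v set \<Rightarrow> 'v) \<Rightarrow> bool" where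
  "EFX_orientation V E f h \<longleftrightarrow> orientation E h \<and>
     (\<forall>u\<in>V. \<forall>v\<in>V. \<forall>g\<in>bundle_of E h v. f u (bundle_of E h u) \<ge> f u (bundle_of E h v - {g}))"

definition strongly_EFX_orientable :: "'v set \<Rightarrow> 'v set set \<Rightarrow> bool" where
  "strongly_EFX_orientable V E \<longleftrightarrow>
     (\<forall>f. graphical_instance V E f \<longrightarrow> (\<exists>h. EFX_orientation V E f h))"

end

theory Submission
  imports Defs
begin

text \<open>In a graph without cut vertices any two vertices lie on a common cycle: grow a cycle
  through \<open>u\<close> along a walk to \<open>w\<close>, rerouting it through an ear at each step. As the graph
  is bipartite, this cycle \<open>c 0, \<dots>, c (2K - 1)\<close> is even and \<open>u = c 0\<close>, \<open>w = c (2j)\<close> are at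
  even distance on it, so the new edge is an even chord.

  Let every vertex value its edge \<open>{c (2k), c (2k + 1)}\<close> of the perfect matching of the cycle
  at 3 and let the ends of the chord value the chord at 2; all other edges are worthless. In an
  EFX orientation the holder of a matching edge holds nothing else. Hence if the odd end
  \<open>c (2k + 1)\<close> holds its matching edge, the link \<open>{c (2k + 1), c (2k + 2)}\<close> goes to
  \<open>c (2k + 2)\<close>, which then cannot hold its own matching edge as well. So either all odd ends
  or all even ends hold their matching edges. In the second case nobody can take the chord; in
  the first, the holder of the chord also holds a link, while the other end of the chord owns
  nothing it values and envies the chord.\<close>

abbreviation is_walk :: "'v set set \<Rightarrow> 'v list \<Rightarrow> bool" where
  "is_walk E P \<equiv> successively (\<lambda>a b. {a, b} \<in> E) P"

abbreviation adj :: "'v set \<Rightarrow> 'v set set \<Rightarrow> ('v \<times> 'v) set" where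
  "adj V E \<equiv> {(a, b). {a, b} \<in> E \<and> a \<in> V \<and> b \<in> V}"

definition is_cycle :: "'v set set \<Rightarrow> 'v list \<Rightarrow> bool" where
  "is_cycle E xs \<longleftrightarrow> distinct xs \<and> 3 \<le> length xs \<and> is_walk E xs \<and> {last xs, hd xs} \<in> E"

lemma is_walk_rev: "is_walk E (rev P) \<longleftrightarrow> is_walk E P"
  by (simp add: successively_rev insert_commute)

lemma is_walk_del_vertex: "is_walk (del_vertex E x) P \<Longrightarrow> is_walk E P"
  by (erule successively_mono) (simp add: del_vertex_def)

lemma is_cycle_rotate1:
  assumes "is_cycle E (a # xs)" shows "is_cycle E (xs @ [a])"
proof -
  have xs: "xs \<noteq> []" using assms by (auto simp: is_cycle_def)
  have "is_walk E xs" "{last xs, a} \<in> E" "{a, hd xs} \<in> E"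
    using assms xs by (auto simp: is_cycle_def successively_Cons)
  then show ?thesis using assms xs
    by (auto simp: is_cycle_def successively_append_iff insert_commute hd_append)
qed

lemma is_cycle_rotate: "is_cycle E (xs @ ys) \<Longrightarrow> is_cycle E (ys @ xs)"
proof (induction xs arbitrary: ys)
  case (Cons a xs)
  then have "is_cycle E (xs @ ys @ [a])" using is_cycle_rotate1[of E a "xs @ ys"] by simp
  then show ?case using Cons.IH by fastforce
qed simp

lemma is_cycle_rev:
  assumes "is_cycle E xs" shows "is_cycle E (rev xs)"
proof -
  have "xs \<noteq> []" using assms by (auto simp: is_cycle_def)
  then show ?thesis using assms
    by (auto simp: is_cycle_def hd_rev last_rev insert_commute elim: successively_mono)
qed

lemma is_cycle_rotate_to:
  assumes "is_cycle E xs" "v \<in> set xs"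
  obtains ys where "is_cycle E (v # ys)" "set (v # ys) = set xs"
proof -
  obtain pre post where "xs = pre @ v # post" using assms(2) by (meson split_list)
  then show ?thesis
    using is_cycle_rotate[of E pre "v # post"] assms(1) by (intro that[of "post @ pre"]) auto
qed

lemma two_le_length:
  assumes "P \<noteq> []" "hd P \<noteq> last P" shows "2 \<le> length P"
  using assms by (cases P) (auto split: if_split_asm simp: Suc_le_eq)

lemma path_into_set:
  assumes "(y, t) \<in> (adj W F)\<^sup>*" "t \<in> T" "y \<notin> T" "y \<in> W"
  shows "\<exists>P. P \<noteq> [] \<and> hd P = y \<and> last P \<in> T \<and> distinct P \<and> is_walk F P \<and> set P \<subseteq> W
    \<and> set (butlast P) \<inter> T = {}"
  using assms
proof (induction rule: converse_rtrancl_induct)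
  case (step y z)
  then have yz: "{y, z} \<in> F" "y \<in> W" "z \<in> W" by auto
  show ?case
  proof (cases "z \<in> T")
    case True
    then have "y \<noteq> z" using \<open>y \<notin> T\<close> by auto
    then show ?thesis using True yz \<open>y \<notin> T\<close> by (intro exI[of _ "[y, z]"]) simp
  next
    case False
    from step.IH[OF \<open>t \<in> T\<close> False yz(3)] obtain P where P: "P \<noteq> []" "hd P = z"
      "last P \<in> T" "distinct P" "is_walk F P" "set P \<subseteq> W" "set (butlast P) \<inter> T = {}"
      by blast
    show ?thesis
    proof (cases "y \<in> set P")
      case True
      \<comment> \<open>shortcut the path at its visit of \<open>y\<close>\<close>
      then obtain i where i: "i < length P" "P ! i = y" by (meson in_set_conv_nth)
      have "set (butlast (drop i P)) \<subseteq> set (butlast P)"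
        by (simp add: butlast_drop set_drop_subset)
      moreover have "is_walk F (drop i P)"
        using P(5) by (metis append_take_drop_id successively_append_iff)
      ultimately show ?thesis using P i set_drop_subset[of i P]
        by (intro exI[of _ "drop i P"]) (auto simp: hd_drop_conv_nth)
    next
      case False
      then show ?thesis using P yz step.prems
        by (intro exI[of _ "y # P"]) (auto simp: successively_Cons)
    qed
  qed
qed simp

lemma is_cycle_ear:
  assumes c: "is_cycle E (v # ys @ x # zs)"
    and P: "P \<noteq> []" "hd P = w" "last P = x" "distinct P" "is_walk E P"
      "set (butlast P) \<inter> set (v # ys @ x # zs) = {}"
    and w: "w \<notin> set (v # ys @ x # zs)" and vw: "{v, w} \<in> E"
  shows "is_cycle E (P @ rev ys @ [v])"
proof -
  obtain P' where P': "P = P' @ [x]" using P(1,3) by (metis append_butlast_last_id)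
  have "P' \<noteq> []" using P(2) P' w by auto
  then have hd: "hd P' = w" using P(2) P' by simp
  have "is_walk E (v # ys @ [x])"
    using c successively_append_iff[of _ "v # ys @ [x]" zs] by (simp add: is_cycle_def)
  then have "is_walk E (x # rev ys @ [v])"
    using is_walk_rev[of E "v # ys @ [x]"] by simp
  moreover have "is_walk E (P' @ [x])" using P(5) P' by simp
  ultimately have "is_walk E (P' @ x # rev ys @ [v])"
    by (auto simp: successively_append_iff)
  moreover have "distinct (P' @ x # rev ys @ [v])"
    using c P(4,6) P' by (auto simp: is_cycle_def)
  ultimately show ?thesis
    using P' \<open>P' \<noteq> []\<close> hd vw by (auto simp: is_cycle_def insert_commute Suc_le_eq)
qed

lemma cycle_through_ear:
  assumes c: "is_cycle E (v # ys @ x # zs)"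
    and P: "P \<noteq> []" "hd P = w" "last P = x" "distinct P" "is_walk E P"
      "set (butlast P) \<inter> set (v # ys @ x # zs) = {}"
    and w: "w \<notin> set (v # ys @ x # zs)" and vw: "{v, w} \<in> E"
    and u: "u \<in> set (v # ys @ x # zs)"
  obtains cs where "is_cycle E cs" "u \<in> set cs" "w \<in> set cs"
    "set cs \<subseteq> set P \<union> set (v # ys @ x # zs)"
proof (cases "u \<in> set zs")
  case False
  then have "u \<in> set (P @ rev ys @ [v])" using u P last_in_set[of P] by auto
  moreover have "w \<in> set P" using P hd_in_set by blast
  ultimately show ?thesis using that[of "P @ rev ys @ [v]"] is_cycle_ear[OF assms(1-9)] by auto
next
  case True
  \<comment> \<open>go around the other side of the cycle\<close>
  have "is_cycle E ((rev zs @ x # rev ys) @ [v])" using is_cycle_rev[OF c] by simp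
  then have "is_cycle E (v # rev zs @ x # rev ys)" using is_cycle_rotate by fastforce
  then have "is_cycle E (P @ zs @ [v])"
    using is_cycle_ear[OF _ P(1-5)] P(6) w vw by fastforce
  moreover have "w \<in> set P" using P hd_in_set by blast
  ultimately show ?thesis using that[of "P @ zs @ [v]"] True by auto
qed

locale two_connected =
  fixes V :: "'v set" and E :: "'v set set"
  assumes simple: "simple_graph V E"
    and three_le_card: "3 \<le> card V"
    and connected_minus_vertex: "\<forall>x\<in>V. connected_graph (V - {x}) (del_vertex E x)"
begin

lemma edge_ends:
  assumes "{a, b} \<in> E" shows "a \<noteq> b" "a \<in> V" "b \<in> V"
proof -
  have "{a, b} \<subseteq> V" "card {a, b} = 2" using assms simple unfolding simple_graph_def by blast+
  then show "a \<noteq> b" "a \<in> V" "b \<in> V" by (force, blast, blast)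
qed

lemma third_vertex:
  obtains t where "t \<in> V" "t \<noteq> x" "t \<noteq> y"
proof -
  have "card {x, y} \<le> 2" by (simp add: card_insert_if)
  then have "\<not> V \<subseteq> {x, y}" using card_mono[of "{x, y}" V] three_le_card by auto
  then show ?thesis using that by blast
qed

lemma reachable_minus_vertex:
  "x \<in> V \<Longrightarrow> y \<in> V - {x} \<Longrightarrow> z \<in> V - {x} \<Longrightarrow> (y, z) \<in> (adj (V - {x}) (del_vertex E x))\<^sup>*"
  using connected_minus_vertex unfolding connected_graph_def by blast

lemma neighbour_other_than:
  assumes "x \<in> V" "y \<in> V" "x \<noteq> y"
  obtains z where "{y, z} \<in> E" "z \<noteq> x"
proof -
  obtain t where t: "t \<in> V" "t \<noteq> x" "t \<noteq> y" by (rule third_vertex)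
  have "(y, t) \<in> (adj (V - {x}) (del_vertex E x))\<^sup>*"
    using reachable_minus_vertex assms t by blast
  then show ?thesis using t(3) that
    by (cases rule: converse_rtranclE) (auto simp: del_vertex_def)
qed

lemma cycle_through_vertex:
  assumes u: "u \<in> V"
  obtains cs where "is_cycle E cs" "u \<in> set cs" "set cs \<subseteq> V"
proof -
  obtain x where x: "x \<in> V" "x \<noteq> u" using third_vertex by metis
  obtain a where a: "{u, a} \<in> E" using neighbour_other_than[OF x(1) u] x by metis
  have aV: "a \<in> V" "a \<noteq> u" using edge_ends[OF a] by auto
  obtain b where b: "{u, b} \<in> E" "b \<noteq> a" using neighbour_other_than[OF aV(1) u] aV by metis
  have bV: "b \<in> V" "b \<noteq> u" using edge_ends[OF b(1)] by auto
  have "(a, b) \<in> (adj (V - {u}) (del_vertex E u))\<^sup>*"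
    using reachable_minus_vertex u aV bV by blast
  from path_into_set[OF this, of "{b}"] obtain P where P: "P \<noteq> []" "hd P = a" "last P = b"
    "distinct P" "is_walk (del_vertex E u) P" "set P \<subseteq> V - {u}"
    using aV b(2) by auto
  have "2 \<le> length P" using two_le_length[OF P(1)] P(2,3) b(2) by simp
  moreover have "is_walk E (P @ [u])"
    using P is_walk_del_vertex[OF P(5)] b(1) by (simp add: successively_append_iff insert_commute)
  ultimately have "is_cycle E (P @ [u])"
    using P a by (auto simp: is_cycle_def insert_commute)
  then show ?thesis using that[of "P @ [u]"] P(6) u by auto
qed

lemma cycle_through_neighbour:
  assumes c: "is_cycle E cs" "u \<in> set cs" "v \<in> set cs" "set cs \<subseteq> V" and vw: "{v, w} \<in> E"
  obtains cs' where "is_cycle E cs'" "u \<in> set cs'" "w \<in> set cs'" "set cs' \<subseteq> V"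
proof (cases "w \<in> set cs")
  case True
  then show ?thesis using that c by blast
next
  case False
  obtain rest where r: "is_cycle E (v # rest)" "set (v # rest) = set cs"
    using is_cycle_rotate_to[OF c(1,3)] by blast
  have "3 \<le> length (v # rest)" "distinct (v # rest)" using r by (auto simp: is_cycle_def)
  then obtain t where t: "t \<in> set rest" "t \<noteq> v" by (cases rest) auto
  have v: "v \<in> V" using c by auto
  have wV: "w \<in> V" "w \<noteq> v" using edge_ends[OF vw] by auto
  have "t \<in> V - {v}" using t r c by auto
  then have "(w, t) \<in> (adj (V - {v}) (del_vertex E v))\<^sup>*"
    using reachable_minus_vertex v wV by blast
  from path_into_set[OF this, of "set rest"] obtain P where P: "P \<noteq> []" "hd P = w"
    "last P \<in> set rest" "distinct P" "is_walk (del_vertex E v) P" "set P \<subseteq> V - {v}"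
    "set (butlast P) \<inter> set rest = {}"
    using t wV False r by auto
  obtain ys zs where yz: "rest = ys @ last P # zs" using P(3) by (meson split_list)
  have "v \<notin> set (butlast P)" using P(6) in_set_butlastD by fastforce
  then have disj: "set (butlast P) \<inter> set (v # ys @ last P # zs) = {}" using P(7) yz by auto
  have ear: "is_cycle E (v # ys @ last P # zs)" using r(1) yz by simp
  have w_notin: "w \<notin> set (v # ys @ last P # zs)" using False r(2) yz by simp
  have u_in: "u \<in> set (v # ys @ last P # zs)" using c(2) r(2) yz by simp
  obtain cs' where cs': "is_cycle E cs'" "u \<in> set cs'" "w \<in> set cs'"
    "set cs' \<subseteq> set P \<union> set (v # ys @ last P # zs)"
    by (rule cycle_through_ear[OF ear P(1,2) refl P(4) is_walk_del_vertex[OF P(5)] disj w_notin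
          vw u_in])
  have "set P \<union> set (v # ys @ last P # zs) \<subseteq> V" using P(6) r(2) yz c(4) by auto
  then show ?thesis using that cs' by blast
qed

lemma cycle_through_two_vertices:
  assumes u: "u \<in> V" and w: "w \<in> V"
  obtains cs where "is_cycle E cs" "u \<in> set cs" "w \<in> set cs" "set cs \<subseteq> V"
proof -
  obtain x where x: "x \<in> V" "x \<noteq> u" "x \<noteq> w" by (rule third_vertex)
  have "(u, w) \<in> (adj (V - {x}) (del_vertex E x))\<^sup>*"
    using reachable_minus_vertex x u w by blast
  moreover have "(adj (V - {x}) (del_vertex E x))\<^sup>* \<subseteq> {(a, b). {a, b} \<in> E}\<^sup>*"
    by (rule rtrancl_mono) (auto simp: del_vertex_def)
  ultimately have "(u, w) \<in> {(a, b). {a, b} \<in> E}\<^sup>*" by blast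
  then have "\<exists>cs. is_cycle E cs \<and> u \<in> set cs \<and> w \<in> set cs \<and> set cs \<subseteq> V"
  proof (induction rule: rtrancl_induct)
    case base
    then show ?case using cycle_through_vertex[OF u] by blast
  next
    case (step y z)
    then obtain cs where cs: "is_cycle E cs" "u \<in> set cs" "y \<in> set cs" "set cs \<subseteq> V" by blast
    have "{y, z} \<in> E" using step(2) by simp
    then obtain cs' where "is_cycle E cs'" "u \<in> set cs'" "z \<in> set cs'" "set cs' \<subseteq> V"
      by (rule cycle_through_neighbour[OF cs])
    then show ?case by blast
  qed
  then show ?thesis using that by blast
qed

end

lemma is_cycle_as_sequence:
  assumes cs: "is_cycle E cs" and u: "u \<in> set cs" and w: "w \<in> set cs"
  obtains c t where "c 0 = u" "c t = w" "t < length cs"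
    "\<And>a b. c a = c b \<longleftrightarrow> int (length cs) dvd (int a - int b)"
    "\<And>i. {c i, c (Suc i)} \<in> E" "\<And>i. c i \<in> set cs"
proof -
  define L where "L = length cs"
  have L: "0 < L" and dist: "distinct cs" using cs by (auto simp: is_cycle_def L_def)
  obtain p where p: "p < L" "cs ! p = u" using u by (metis L_def in_set_conv_nth)
  obtain q where q: "q < L" "cs ! q = w" using w by (metis L_def in_set_conv_nth)
  define c where "c i = cs ! ((p + i) mod L)" for i
  have "c ((q + L - p) mod L) = w"
  proof -
    have "(p + (q + L - p) mod L) mod L = (q + L) mod L"
      using p by (simp add: mod_add_right_eq)
    then show ?thesis using q by (simp add: c_def)
  qed
  moreover have "c a = c b \<longleftrightarrow> int L dvd (int a - int b)" for a b
  proof -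
    have "c a = c b \<longleftrightarrow> (p + a) mod L = (p + b) mod L"
      using dist L by (simp add: c_def nth_eq_iff_index_eq L_def)
    also have "\<dots> \<longleftrightarrow> int (p + a) mod int L = int (p + b) mod int L"
      by (simp only: of_nat_eq_iff flip: zmod_int)
    also have "\<dots> \<longleftrightarrow> int L dvd (int a - int b)" by (simp add: mod_eq_dvd_iff)
    finally show ?thesis .
  qed
  moreover have "{c i, c (Suc i)} \<in> E" for i
  proof (cases "Suc ((p + i) mod L) < L")
    case True
    then have "(p + Suc i) mod L = Suc ((p + i) mod L)" by (simp add: mod_Suc)
    moreover have "is_walk E cs" using cs by (simp add: is_cycle_def)
    ultimately show ?thesis
      using True successively_nth[of _ cs] by (simp add: c_def L_def)
  next
    case False
    \<comment> \<open>the closing edge of the cycle\<close>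
    then have "(p + i) mod L = L - 1" "(p + Suc i) mod L = 0"
      using L mod_less_divisor[OF L, of "p + i"] by (simp_all add: mod_Suc)
    then show ?thesis
      using cs L by (simp add: c_def is_cycle_def L_def last_conv_nth hd_conv_nth)
  qed
  moreover have "c i \<in> set cs" for i using L by (simp add: c_def L_def)
  moreover have "c 0 = u" using p by (simp add: c_def)
  ultimately show ?thesis using that[of c "(q + L - p) mod L"] L by (simp add: L_def)
qed

lemma bipartition_edge_sides:
  assumes "bipartition V E A B" "{a, b} \<in> E"
  shows "a \<in> A \<longleftrightarrow> b \<notin> A"
proof -
  obtain a' b' where ab: "a' \<in> A" "b' \<in> B" "{a, b} = {a', b'}" and "A \<inter> B = {}"
    using assms unfolding bipartition_def by blast
  moreover have "(a = a' \<and> b = b') \<or> (a = b' \<and> b = a')" using ab(3) by (simp add: doubleton_eq_iff)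
  ultimately show ?thesis by blast
qed

lemma bipartition_walk_parity:
  assumes "bipartition V E A B" "\<And>i. {c i, c (Suc i)} \<in> E"
  shows "c i \<in> A \<longleftrightarrow> (c 0 \<in> A \<longleftrightarrow> even i)"
proof (induction i)
  case (Suc i)
  then show ?case using bipartition_edge_sides[OF assms(1) assms(2)[of i]] by auto
qed simp

definition matching_edge :: "(nat \<Rightarrow> 'v) \<Rightarrow> nat \<Rightarrow> 'v set" where
  "matching_edge c k = {c (2*k), c (Suc (2*k))}"

definition chord_valuation :: "(nat \<Rightarrow> 'v) \<Rightarrow> nat \<Rightarrow> 'v \<Rightarrow> 'v set set \<Rightarrow> real" where
  "chord_valuation c j x S =
     (if \<exists>k. matching_edge c k \<in> S \<and> x \<in> matching_edge c k then 3
      else if x \<in> {c 0, c (2*j)} \<and> {c 0, c (2*j)} \<in> S then 2 else 0)"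

lemma graphical_instance_chord_valuation: "graphical_instance V E (chord_valuation c j)"
proof -
  have "chord_valuation c j x X = chord_valuation c j x (X \<inter> incident_edges E x)"
    if "X \<subseteq> E" for x X
    using that by (auto simp: chord_valuation_def incident_edges_def matching_edge_def)
  moreover have "chord_valuation c j x X \<le> chord_valuation c j x Y" if "X \<subseteq> Y" for x X Y
    using that by (auto simp: chord_valuation_def)
  moreover have "0 \<le> chord_valuation c j x X" for x X
    by (simp add: chord_valuation_def)
  ultimately show ?thesis unfolding graphical_instance_def by blast
qed

locale cycle_with_even_chord =
  fixes V :: "'v set" and E :: "'v set set" and c :: "nat \<Rightarrow> 'v" and K j :: nat
  assumes c_eq_iff: "c a = c b \<longleftrightarrow> int (2*K) dvd (int a - int b)"
    and cycle_edge: "{c i, c (Suc i)} \<in> E"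
    and c_in_V: "c i \<in> V"
    and chord_in_E: "{c 0, c (2*j)} \<in> E"
    and j_pos: "0 < j" and j_less_K: "j < K"
begin

abbreviation chord :: "'v set" where "chord \<equiv> {c 0, c (2*j)}"

lemma c_periodic: "c (i + 2*K) = c i"
  using c_eq_iff by simp

lemma c_Suc_neq: "c (Suc i) \<noteq> c i"
proof -
  have "\<not> int (2*K) dvd 1" using j_less_K by (simp add: zdvd_not_zless)
  then show ?thesis using c_eq_iff[of "Suc i" i] by simp
qed

lemma c_Suc_Suc_neq: "c (Suc (Suc i)) \<noteq> c i"
proof -
  have "\<not> int (2*K) dvd 2" using j_pos j_less_K by (simp add: zdvd_not_zless)
  then show ?thesis using c_eq_iff[of "Suc (Suc i)" i] by simp
qed

lemma c_odd_neq_even: "c (Suc (2*k)) \<noteq> c (2*l)"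
proof -
  have "\<not> int (2*K) dvd (int (Suc (2*k)) - int (2*l))"
  proof
    assume "int (2*K) dvd (int (Suc (2*k)) - int (2*l))"
    then have "2 dvd (int (Suc (2*k)) - int (2*l))"
      by (metis dvd_mult_left of_nat_mult of_nat_numeral)
    then show False by presburger
  qed
  then show ?thesis using c_eq_iff by blast
qed

lemma chord_ends_neq: "c 0 \<noteq> c (2*j)"
proof -
  have "\<not> int (2*K) dvd int (2*j)" using j_pos j_less_K by (auto dest: zdvd_imp_le)
  then show ?thesis using c_eq_iff[of 0 "2*j"] by simp
qed

lemma matching_edge_in_E: "matching_edge c k \<in> E"
  using cycle_edge by (simp add: matching_edge_def)

lemma matching_edge_periodic: "matching_edge c (k + K) = matching_edge c k"
  using c_periodic[of "2*k"] c_periodic[of "Suc (2*k)"]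
  by (simp add: matching_edge_def algebra_simps)

lemma matching_edge_unique:
  assumes "x \<in> matching_edge c k" "x \<in> matching_edge c l"
  shows "matching_edge c l = matching_edge c k"
proof -
  have "c (2*k) = c (2*l) \<longleftrightarrow> c (Suc (2*k)) = c (Suc (2*l))" using c_eq_iff by simp
  then show ?thesis
    using assms c_odd_neq_even c_odd_neq_even[THEN not_sym] by (auto simp: matching_edge_def)
qed

lemma chord_not_cycle_edge: "chord \<noteq> {c i, c (Suc i)}"
proof
  assume chord: "chord = {c i, c (Suc i)}"
  have "\<exists>m. i = 2*m \<or> i = Suc (2*m)" by presburger
  then obtain m where "i = 2*m \<or> i = Suc (2*m)" by blast
  then have "c (Suc (2*m)) \<in> chord" using chord by auto
  then show False using c_odd_neq_even[of m 0] c_odd_neq_even[of m j] by auto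
qed

lemma chord_not_matching_edge: "chord \<noteq> matching_edge c k"
  using chord_not_cycle_edge[of "2*k"] by (simp add: matching_edge_def)

end

locale EFX_on_cycle_with_even_chord = cycle_with_even_chord V E c K j
  for V :: "'v set" and E c K j +
  fixes h :: "'v set \<Rightarrow> 'v"
  assumes EFX: "EFX_orientation V E (chord_valuation c j) h"
begin

abbreviation bnd :: "'v \<Rightarrow> 'v set set" where "bnd \<equiv> bundle_of E h"
abbreviation f :: "'v \<Rightarrow> 'v set set \<Rightarrow> real" where "f \<equiv> chord_valuation c j"

lemma head_in_edge: "g \<in> E \<Longrightarrow> h g \<in> g"
  using EFX by (auto simp: EFX_orientation_def orientation_def)

lemma EFX_le: "x \<in> V \<Longrightarrow> y \<in> V \<Longrightarrow> g \<in> bnd y \<Longrightarrow> f x (bnd y - {g}) \<le> f x (bnd x)"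
  using EFX by (auto simp: EFX_orientation_def)

lemma in_bundle_iff: "g \<in> bnd y \<longleftrightarrow> g \<in> E \<and> h g = y"
  by (simp add: bundle_of_def)

lemma value_less_3:
  assumes "x \<in> matching_edge c k" "h (matching_edge c k) \<noteq> x"
  shows "f x (bnd x) < 3"
proof -
  have "\<not> (\<exists>l. matching_edge c l \<in> bnd x \<and> x \<in> matching_edge c l)"
    using matching_edge_unique[OF assms(1)] assms(2) in_bundle_iff by metis
  then show ?thesis by (simp add: chord_valuation_def)
qed

text \<open>Whoever holds a matching edge holds nothing else: the other end values the matching
  edge at 3 but its own bundle below 3, and EFX lets it remove any other edge from the holder.\<close>
lemma holder_bundle: "bnd (h (matching_edge c k)) = {matching_edge c k}"
proof -
  define g where "g = matching_edge c k"
  define y where "y = h g"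
  have g: "g \<in> E" "g \<in> bnd y"
    using matching_edge_in_E by (simp_all add: g_def y_def in_bundle_iff)
  obtain x where x: "x \<in> g" "x \<noteq> y"
    using c_Suc_neq[of "2*k"] by (auto simp: g_def matching_edge_def)
  have V: "x \<in> V" "y \<in> V"
    using x head_in_edge[OF g(1)] c_in_V by (auto simp: g_def y_def matching_edge_def)
  have "f x (bnd x) < 3" using value_less_3 x by (simp add: g_def y_def)
  moreover have "f x (bnd y - {g'}) = 3" if "g' \<in> bnd y" "g' \<noteq> g" for g'
    using that g x by (auto simp: chord_valuation_def g_def)
  ultimately have "g' = g" if "g' \<in> bnd y" for g'
    using that EFX_le[OF V] by fastforce
  then show ?thesis using g by (auto simp: g_def y_def)
qed

definition odd_end_holds :: "nat \<Rightarrow> bool" where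
  "odd_end_holds k \<longleftrightarrow> h (matching_edge c k) = c (Suc (2*k))"

lemma even_end_holds: "\<not> odd_end_holds k \<Longrightarrow> h (matching_edge c k) = c (2*k)"
  using head_in_edge[OF matching_edge_in_E[of k]]
  by (auto simp: odd_end_holds_def matching_edge_def)

lemma link_edge_head:
  assumes "odd_end_holds k"
  shows "h {c (Suc (2*k)), c (Suc (Suc (2*k)))} = c (Suc (Suc (2*k)))"
proof -
  let ?l = "{c (Suc (2*k)), c (Suc (Suc (2*k)))}"
  have "?l \<noteq> matching_edge c k"
    using c_Suc_Suc_neq[of "2*k"] c_Suc_neq[of "Suc (2*k)"] by (auto simp: matching_edge_def)
  then have "?l \<notin> bnd (c (Suc (2*k)))"
    using holder_bundle[of k] assms by (simp add: odd_end_holds_def)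
  then show ?thesis using head_in_edge[of ?l] cycle_edge by (auto simp: in_bundle_iff)
qed

lemma odd_end_holds_Suc:
  assumes "odd_end_holds k" shows "odd_end_holds (Suc k)"
proof (rule ccontr)
  assume "\<not> odd_end_holds (Suc k)"
  then have "bnd (c (Suc (Suc (2*k)))) = {matching_edge c (Suc k)}"
    using holder_bundle[of "Suc k"] even_end_holds by simp
  moreover have "{c (Suc (2*k)), c (Suc (Suc (2*k)))} \<in> bnd (c (Suc (Suc (2*k))))"
    using link_edge_head[OF assms] cycle_edge by (simp add: in_bundle_iff)
  ultimately have "c (Suc (2*k)) \<in> matching_edge c (Suc k)" by blast
  then show False
    using c_Suc_neq[of "Suc (2*k)"] c_Suc_Suc_neq[of "Suc (2*k)"] by (auto simp: matching_edge_def)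
qed

lemma odd_end_holds_iff: "odd_end_holds k \<longleftrightarrow> odd_end_holds 0"
proof -
  have up: "odd_end_holds (k + t)" if "odd_end_holds k" for k t
    by (induction t) (use that odd_end_holds_Suc in auto)
  have period: "odd_end_holds (m*K) \<longleftrightarrow> odd_end_holds 0" for m
  proof (induction m)
    case (Suc m)
    have "c (Suc (2*(K + m*K))) = c (Suc (2*(m*K)))"
      using c_periodic[of "Suc (2*(m*K))"] by (simp add: algebra_simps)
    then show ?case
      using Suc matching_edge_periodic[of "m*K"] by (simp add: odd_end_holds_def add.commute)
  qed simp
  have "k \<le> k*K" using j_less_K by simp
  then show ?thesis using up[of k "k*K - k"] up[of 0 k] period[of k] by auto
qed

lemma value_zero:
  assumes "odd_end_holds 0" "h chord \<noteq> c (2*b)"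
  shows "f (c (2*b)) (bnd (c (2*b))) = 0"
proof -
  have "h (matching_edge c b) \<noteq> c (2*b)"
    using assms(1) c_Suc_neq[of "2*b"] odd_end_holds_iff[of b] by (simp add: odd_end_holds_def)
  then have "\<not> (\<exists>l. matching_edge c l \<in> bnd (c (2*b)) \<and> c (2*b) \<in> matching_edge c l)"
    using matching_edge_unique[of "c (2*b)" b] in_bundle_iff by (metis insertI1 matching_edge_def)
  moreover have "chord \<notin> bnd (c (2*b))" using assms(2) by (simp add: in_bundle_iff)
  ultimately show ?thesis by (simp add: chord_valuation_def)
qed

lemma chord_holder_envied:
  assumes "odd_end_holds 0" "h chord = c (2*a)" "0 < a" "c (2*b) \<in> chord" "c (2*b) \<noteq> c (2*a)"
  shows False
proof -
  let ?l = "{c (Suc (2*(a-1))), c (Suc (Suc (2*(a-1))))}"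
  have a: "Suc (Suc (2*(a-1))) = 2*a" using assms(3) by simp
  have "?l \<in> bnd (c (2*a))"
    using link_edge_head[of "a - 1"] assms(1) odd_end_holds_iff cycle_edge[of "Suc (2*(a-1))"] a
    by (simp add: in_bundle_iff)
  moreover have "chord \<in> bnd (c (2*a)) - {?l}"
    using assms(2) chord_in_E chord_not_cycle_edge by (simp add: in_bundle_iff)
  then have "2 \<le> f (c (2*b)) (bnd (c (2*a)) - {?l})"
    using assms(4) by (simp add: chord_valuation_def)
  ultimately have "2 \<le> f (c (2*b)) (bnd (c (2*b)))"
    using EFX_le[OF c_in_V c_in_V] by (meson order_trans)
  then show False using value_zero[OF assms(1)] assms(2,5) by simp
qed

lemma no_EFX_orientation: False
proof (cases "odd_end_holds 0")
  case True
  have "h chord = c (2*K) \<or> h chord = c (2*j)"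
    using head_in_edge[OF chord_in_E] c_periodic[of 0] by auto
  then show False
  proof
    assume "h chord = c (2*K)"
    then show False
      using chord_holder_envied[OF True, of K j] j_less_K chord_ends_neq c_periodic[of 0] by auto
  next
    assume "h chord = c (2*j)"
    then show False
      using chord_holder_envied[OF True, of j 0] j_pos chord_ends_neq by auto
  qed
next
  case False
  \<comment> \<open>all even ends hold their matching edges, so nobody can also hold the chord\<close>
  then have bnd: "bnd (c (2*a)) = {matching_edge c a}" for a
    using holder_bundle[of a] even_end_holds odd_end_holds_iff by simp
  have "chord \<in> bnd (c 0) \<or> chord \<in> bnd (c (2*j))"
    using head_in_edge[OF chord_in_E] chord_in_E by (auto simp: in_bundle_iff)
  then have "chord = matching_edge c 0 \<or> chord = matching_edge c j"
    using bnd[of 0] bnd[of j] by simp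
  then show False using chord_not_matching_edge by blast
qed

end

context cycle_with_even_chord
begin

theorem not_strongly_EFX_orientable: "\<not> strongly_EFX_orientable V E"
proof
  assume "strongly_EFX_orientable V E"
  then obtain h where "EFX_orientation V E (chord_valuation c j) h"
    using graphical_instance_chord_valuation unfolding strongly_EFX_orientable_def by blast
  then interpret EFX_on_cycle_with_even_chord V E c K j h by unfold_locales
  show False by (rule no_EFX_orientation)
qed

end

theorem mainTheorem14:
  fixes V :: "'v set" and E :: "'v set set" and A B :: "'v set" and u w :: 'v
  assumes "simple_graph V E"
    and "bipartition V E A B"
    and "card V \<ge> 4"
    and "\<forall>x\<in>V. connected_graph (V - {x}) (del_vertex E x)"
    and "u \<in> V" and "w \<in> V" and "u \<noteq> w"
    and "(u \<in> A \<and> w \<in> A) \<or> (u \<in> B \<and> w \<in> B)"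
  shows "\<not> strongly_EFX_orientable V (insert {u, w} E)"
proof -
  interpret two_connected V E using assms(1,3,4) by unfold_locales simp_all
  obtain cs where cs: "is_cycle E cs" "u \<in> set cs" "w \<in> set cs" "set cs \<subseteq> V"
    using cycle_through_two_vertices assms(5,6) by metis
  obtain c t where c: "c 0 = u" "c t = w" "t < length cs"
    "\<And>a b. c a = c b \<longleftrightarrow> int (length cs) dvd (int a - int b)"
    "\<And>i. {c i, c (Suc i)} \<in> E" "\<And>i. c i \<in> set cs"
    using is_cycle_as_sequence[OF cs(1-3)] by metis
  have side: "c i \<in> A \<longleftrightarrow> (u \<in> A \<longleftrightarrow> even i)" for i
    using bipartition_walk_parity[where c = c, OF assms(2) c(5)] c(1) by simp
  have "even (length cs)" using side[of "length cs"] c(1) c(4)[of "length cs" 0] by auto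
  moreover have "even t"
    using side[of t] c(2) assms(2,8) by (auto simp: bipartition_def)
  moreover have "t \<noteq> 0" using c(1,2) assms(7) by (metis)
  ultimately interpret cycle_with_even_chord V "insert {u, w} E" c "length cs div 2" "t div 2"
    using c cs(4) by unfold_locales auto
  show ?thesis using not_strongly_EFX_orientable c(1,2) \<open>even t\<close> by simp
qed

end
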